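(* Let $\mathbf{A}$ be a finite algebra with $|A|>1$. Then the diagonal $\Delta=\{(a,a): a\in A\}$ does not Jónsson absorb $\mathbf{A}^2$.
   Context: Jónsson absorption: a subuniverse $B$ of an algebra $\mathbf{C}$ Jónsson absorbs $\mathbf{C}$ if there are ternary terms $d_0,\dots,d_n$ such that $d_i(b,c,b')\in B$ for all $i$, all $b,b'\in B$, $c\in C$; $d_i(x,y,y)=d_{i+1}(x,x,y)$ for all $i<n$; $d_0(x,y,z)=x$ and $d_n(x,y,z)=z$ (identities holding in $\mathbf{C}$). *)

theory Defs
  imports Main
begin

datatype 'f trm = Var nat | App 'f "'f trm list"

fun wf_trm :: "('f \<Rightarrow> nat) \<Rightarrow> 'f trm \<Rightarrow> bool" where
  "wf_trm ar (Var n) = True"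
| "wf_trm ar (App f ts) = (length ts = ar f \<and> (\<forall>t\<in>set ts. wf_trm ar t))"

fun vars :: "'f trm \<Rightarrow> nat set" where
  "vars (Var n) = {n}"
| "vars (App f ts) = (\<Union>t\<in>set ts. vars t)"

fun eval :: "('f \<Rightarrow> 'a list \<Rightarrow> 'a) \<Rightarrow> (nat \<Rightarrow> 'a) \<Rightarrow> 'f trm \<Rightarrow> 'a" where
  "eval I e (Var n) = e n"
| "eval I e (App f ts) = I f (map (eval I e) ts)"

definition algebra :: "('f \<Rightarrow> nat) \<Rightarrow> ('f \<Rightarrow> 'a list \<Rightarrow> 'a) \<Rightarrow> 'a set \<Rightarrow> bool" where
  "algebra ar I A \<longleftrightarrow> (\<forall>f xs. length xs = ar f \<and> set xs \<subseteq> A \<longrightarrow> I f xs \<in> A)"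

definition subuniverse :: "('f \<Rightarrow> nat) \<Rightarrow> ('f \<Rightarrow> 'a list \<Rightarrow> 'a) \<Rightarrow> 'a set \<Rightarrow> 'a set \<Rightarrow> bool" where
  "subuniverse ar I C B \<longleftrightarrow> B \<subseteq> C \<and> (\<forall>f xs. length xs = ar f \<and> set xs \<subseteq> B \<longrightarrow> I f xs \<in> B)"

definition prod_ops :: "('f \<Rightarrow> 'a list \<Rightarrow> 'a) \<Rightarrow> 'f \<Rightarrow> ('a \<times> 'a) list \<Rightarrow> 'a \<times> 'a" where
  "prod_ops I f xs = (I f (map fst xs), I f (map snd xs))"

definition env3 :: "'a \<Rightarrow> 'a \<Rightarrow> 'a \<Rightarrow> nat \<Rightarrow> 'a" where
  "env3 x y z = (\<lambda>i. if i = 0 then x else if i = 1 then y else z)"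

definition ternary_term :: "('f \<Rightarrow> nat) \<Rightarrow> 'f trm \<Rightarrow> bool" where
  "ternary_term ar t \<longleftrightarrow> wf_trm ar t \<and> vars t \<subseteq> {0, 1, 2}"

definition jonsson_absorbs :: "('f \<Rightarrow> nat) \<Rightarrow> ('f \<Rightarrow> 'c list \<Rightarrow> 'c) \<Rightarrow> 'c set \<Rightarrow> 'c set \<Rightarrow> bool" where
  "jonsson_absorbs ar I C B \<longleftrightarrow> subuniverse ar I C B \<and>
     (\<exists>(n::nat) (d :: nat \<Rightarrow> 'f trm).
        (\<forall>i\<le>n. ternary_term ar (d i)) \<and>
        (\<forall>i\<le>n. \<forall>b\<in>B. \<forall>b'\<in>B. \<forall>c\<in>C. eval I (env3 b c b') (d i) \<in> B) \<and>
        (\<forall>i<n. \<forall>x\<in>C. \<forall>y\<in>C. eval I (env3 x y y) (d i) = eval I (env3 x x y) (d (Suc i))) \<and>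
        (\<forall>x\<in>C. \<forall>y\<in>C. \<forall>z\<in>C. eval I (env3 x y z) (d 0) = x \<and> eval I (env3 x y z) (d n) = z))"

end

theory Submission
  imports Defs
begin

text \<open>
  Absorption of the diagonal forces every \<open>d\<^sub>i(b, c, b')\<close> to be a diagonal pair; reading
  off the two coordinates with \<open>c = (p, q)\<close> shows that on \<open>A\<close> each \<open>d\<^sub>i(x, y, z)\<close> does not
  depend on \<open>y\<close>. Then \<open>d\<^sub>i\<^sub>+\<^sub>1(x, x, y) = d\<^sub>i(x, y, y) = d\<^sub>i(x, x, y)\<close>, so by induction
  \<open>d\<^sub>n(x, x, y) = d\<^sub>0(x, x, y) = x\<close>, while \<open>d\<^sub>n(x, x, y) = y\<close>; hence \<open>A\<close> has one element.
\<close>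

lemma eval_prod_ops:
  "eval (prod_ops I) e t = (eval I (fst \<circ> e) t, eval I (snd \<circ> e) t)"
  by (induction t) (simp_all add: prod_ops_def comp_def cong: map_cong)

lemma fst_comp_env3: "fst \<circ> env3 x y z = env3 (fst x) (fst y) (fst z)"
  and snd_comp_env3: "snd \<circ> env3 x y z = env3 (snd x) (snd y) (snd z)"
  by (auto simp: env3_def)

lemma jonsson_chain_ignoring_middle_trivial:
  assumes chain: "\<And>i x y. i < n \<Longrightarrow> x \<in> A \<Longrightarrow> y \<in> A \<Longrightarrow>
      eval I (env3 x y y) (d i) = eval I (env3 x x y) (d (Suc i))"
    and first: "\<And>x y. x \<in> A \<Longrightarrow> y \<in> A \<Longrightarrow> eval I (env3 x x y) (d 0) = x"
    and last: "\<And>x y. x \<in> A \<Longrightarrow> y \<in> A \<Longrightarrow> eval I (env3 x x y) (d n) = y"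
    and ignore_middle: "\<And>i x p q z. i \<le> n \<Longrightarrow> x \<in> A \<Longrightarrow> p \<in> A \<Longrightarrow> q \<in> A \<Longrightarrow> z \<in> A \<Longrightarrow>
      eval I (env3 x p z) (d i) = eval I (env3 x q z) (d i)"
    and "x \<in> A" "y \<in> A"
  shows "x = y"
proof -
  have "eval I (env3 x x y) (d i) = x" if "i \<le> n" for i
    using that
  proof (induction i)
    case 0
    show ?case using first \<open>x \<in> A\<close> \<open>y \<in> A\<close> .
  next
    case (Suc i)
    have "eval I (env3 x x y) (d (Suc i)) = eval I (env3 x y y) (d i)"
      using chain[of i x y] Suc.prems \<open>x \<in> A\<close> \<open>y \<in> A\<close> by simp
    also have "\<dots> = eval I (env3 x x y) (d i)"
      using ignore_middle[of i x y x y] Suc.prems \<open>x \<in> A\<close> \<open>y \<in> A\<close> by simp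
    finally show ?case using Suc by simp
  qed
  then show "x = y" using last[OF \<open>x \<in> A\<close> \<open>y \<in> A\<close>] by simp
qed

lemma jonsson_absorbs_diagonal_imp_trivial:
  assumes "jonsson_absorbs ar (prod_ops I) (A \<times> A) {(a, a) | a. a \<in> A}"
    and "x \<in> A" "y \<in> A"
  shows "x = y"
proof -
  let ?\<Delta> = "{(a, a) | a. a \<in> A}"
  from assms(1) obtain n d where
    absorb: "\<forall>i\<le>n. \<forall>b\<in>?\<Delta>. \<forall>b'\<in>?\<Delta>. \<forall>c\<in>A \<times> A. eval (prod_ops I) (env3 b c b') (d i) \<in> ?\<Delta>" and
    chain: "\<forall>i<n. \<forall>x\<in>A \<times> A. \<forall>y\<in>A \<times> A.
      eval (prod_ops I) (env3 x y y) (d i) = eval (prod_ops I) (env3 x x y) (d (Suc i))" and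
    ends: "\<forall>x\<in>A \<times> A. \<forall>y\<in>A \<times> A. \<forall>z\<in>A \<times> A.
      eval (prod_ops I) (env3 x y z) (d 0) = x \<and> eval (prod_ops I) (env3 x y z) (d n) = z"
    unfolding jonsson_absorbs_def by (elim conjE exE) (rule that)
  show "x = y"
  proof (rule jonsson_chain_ignoring_middle_trivial[where n = n and d = d])
    fix i x y
    assume "i < n" "x \<in> A" "y \<in> A"
    with chain[rule_format, of i "(x, x)" "(y, y)"]
    show "eval I (env3 x y y) (d i) = eval I (env3 x x y) (d (Suc i))"
      by (simp add: eval_prod_ops fst_comp_env3)
  next
    fix x y
    assume "x \<in> A" "y \<in> A"
    with ends[rule_format, of "(x, x)" "(x, x)" "(y, y)"]
    show "eval I (env3 x x y) (d 0) = x" and "eval I (env3 x x y) (d n) = y"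
      by (simp_all add: eval_prod_ops fst_comp_env3)
  next
    fix i x p q z
    assume "i \<le> n" "x \<in> A" "p \<in> A" "q \<in> A" "z \<in> A"
    with absorb[rule_format, of i "(x, x)" "(z, z)" "(p, q)"]
    show "eval I (env3 x p z) (d i) = eval I (env3 x q z) (d i)"
      by (auto simp: eval_prod_ops fst_comp_env3 snd_comp_env3)
  qed (fact assms)+
qed

theorem proposition2p8:
  fixes A :: "'a set" and ar :: "'f \<Rightarrow> nat" and I :: "'f \<Rightarrow> 'a list \<Rightarrow> 'a"
  assumes "algebra ar I A" and "finite A" and "card A > 1"
  shows "\<not> jonsson_absorbs ar (prod_ops I) (A \<times> A) {(a, a) | a. a \<in> A}"
proof
  assume absorbs: "jonsson_absorbs ar (prod_ops I) (A \<times> A) {(a, a) | a. a \<in> A}"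
  from \<open>card A > 1\<close> obtain x y where "x \<in> A" "y \<in> A" "x \<noteq> y"
    using card_le_Suc0_iff_eq[OF \<open>finite A\<close>] by (auto simp: not_le[symmetric])
  with jonsson_absorbs_diagonal_imp_trivial[OF absorbs] show False by blast
qed

end
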